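(* Let $\mathcal M$ be a complete, connected Riemannian manifold, let $A=(a_{ij})\in\mathbb R^{N\times K}$ have unit row sums, let $f\in\mathcal M^N$ and $p\in[1,\infty)$. Then the data term $u\mapsto \mathrm{dist}(\mathcal A(u),f)^p=\sum_{i=1}^N\mathrm{dist}(\mathcal A(u)_i,f_i)^p$ is a lower semicontinuous function on $\mathcal M^K$.
   Context: $\mathrm{dist}$ denotes the Riemannian distance on $\mathcal M$. The entries $a_{ij}$ may be negative; only $\sum_j a_{ij}=1$ for each $i$ is assumed. For $u\in\mathcal M^K$, $\mathrm{mean}(a_{i,\cdot},u)=\operatorname{argmin}_{v\in\mathcal M}\sum_{j=1}^K a_{ij}\,\mathrm{dist}(v,u_j)^2$ (set of minimizers), and $\mathcal A(u)_i$ is the set of elements of $\mathrm{mean}(a_{i,\cdot},u)$ minimizing $\mathrm{dist}(\cdot,f_i)$ over $\mathrm{mean}(a_{i,\cdot},u)$; $\mathrm{dist}(\mathcal A(u)_i,f_i)$ denotes the common distance of these points to $f_i$. *)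

theory Defs
  imports "HOL-Analysis.Analysis"
begin

text \<open>The manifold M is modelled as a type 'm of class heine_borel (a proper,
hence complete, metric space; complete Riemannian manifolds are proper by
Hopf-Rinow).\<close>

definition wmean :: "real^'k::finite \<Rightarrow> ('m::metric_space)^'k \<Rightarrow> 'm set" where
  "wmean a u = {v. \<forall>w. (\<Sum>j\<in>UNIV. a$j * (dist v (u$j))\<^sup>2) \<le> (\<Sum>j\<in>UNIV. a$j * (dist w (u$j))\<^sup>2)}"

definition Aset :: "real^'k::finite^'n::finite \<Rightarrow> ('m::metric_space)^'n \<Rightarrow> 'm^'k \<Rightarrow> 'n \<Rightarrow> 'm set" where
  "Aset A f u i = {v \<in> wmean (A$i) u. \<forall>w\<in>wmean (A$i) u. dist v (f$i) \<le> dist w (f$i)}"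

text \<open>dist(A(u)_i, f_i): the common distance of the points of A(u)_i to f_i.\<close>
definition distA :: "real^'k::finite^'n::finite \<Rightarrow> ('m::metric_space)^'n \<Rightarrow> 'm^'k \<Rightarrow> 'n \<Rightarrow> real" where
  "distA A f u i = (INF v\<in>Aset A f u i. dist v (f$i))"

definition data_term :: "real^'k::finite^'n::finite \<Rightarrow> ('m::metric_space)^'n \<Rightarrow> real \<Rightarrow> 'm^'k \<Rightarrow> real" where
  "data_term A f p u = (\<Sum>i\<in>UNIV. (distA A f u i) powr p)"

definition lsc :: "('a::topological_space \<Rightarrow> real) \<Rightarrow> bool" where
  "lsc g \<longleftrightarrow> (\<forall>x c. c < g x \<longrightarrow> (\<forall>\<^sub>F y in nhds x. c < g y))"

end

theory Submission
  imports Defs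
begin

text \<open>Since the weights sum to one, the energy v \<mapsto> sum_j a_j dist(v,u_j)^2 differs from
dist(v,z)^2 by at most |a|_1 D (2 dist(v,z) + D) when all u_j lie within D of z. So its sublevel
sets, and hence the means, lie in balls whose radius depends only on D: the means form a nonempty,
compact-valued, locally bounded map of u, and its graph is closed because the energy is jointly
continuous in (u,v). The distance dist(A(u)_i, f_i) is the minimum of the continuous function
dist(-, f_i) over the means, and a minimum of a continuous function over such a map is lower
semicontinuous in u.\<close>

lemma lsc_add:
  assumes "lsc g" "lsc h"
  shows "lsc (\<lambda>x. g x + h x)"
  unfolding lsc_def
proof (intro allI impI)
  fix x c assume c: "c < g x + h x"
  define e where "e = (g x + h x - c) / 2"
  have "g x - e < g x" "h x - e < h x" using c by (auto simp: e_def)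
  then have "\<forall>\<^sub>F y in nhds x. g x - e < g y" "\<forall>\<^sub>F y in nhds x. h x - e < h y"
    using assms unfolding lsc_def by blast+
  then show "\<forall>\<^sub>F y in nhds x. c < g y + h y"
    by eventually_elim (simp add: e_def field_simps)
qed

lemma lsc_sum:
  assumes "finite S" "\<And>i. i \<in> S \<Longrightarrow> lsc (g i)"
  shows "lsc (\<lambda>x. \<Sum>i\<in>S. g i x)"
  using assms by (induction S rule: finite_induct) (auto simp: lsc_def[of "\<lambda>_. 0"] intro: lsc_add)

lemma lsc_powr:
  assumes "lsc g" "\<And>x. 0 \<le> g x" "0 < p"
  shows "lsc (\<lambda>x. g x powr p)"
  unfolding lsc_def
proof (intro allI impI)
  fix x c assume c: "c < g x powr p"
  show "\<forall>\<^sub>F y in nhds x. c < g y powr p"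
  proof (cases "c < 0")
    case True
    then show ?thesis by (intro always_eventually allI) (meson less_le_trans powr_ge_zero)
  next
    case False
    have "c powr (1/p) < (g x powr p) powr (1/p)"
      using False c assms(3) by (intro powr_less_mono2) auto
    also have "\<dots> = g x" using assms by (simp add: powr_powr)
    finally have "\<forall>\<^sub>F y in nhds x. c powr (1/p) < g y" using assms(1) unfolding lsc_def by blast
    then show ?thesis
    proof eventually_elim
      case (elim y)
      then have "(c powr (1/p)) powr p < g y powr p"
        using assms(3) False by (intro powr_less_mono2) auto
      then show "c < g y powr p" using False assms(3) by (simp add: powr_powr)
    qed
  qed
qed

lemma compact_attains_INF:
  fixes g :: "'a::topological_space \<Rightarrow> real"
  assumes "compact S" "S \<noteq> {}" "continuous_on S g"
  obtains m where "m \<in> S" "\<And>v. v \<in> S \<Longrightarrow> g m \<le> g v" "(INF v\<in>S. g v) = g m"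
proof -
  obtain m where m: "m \<in> S" "\<And>v. v \<in> S \<Longrightarrow> g m \<le> g v"
    using continuous_attains_inf[OF assms] by blast
  moreover from m have "(INF v\<in>S. g v) = g m" by (intro cInf_eq_minimum) auto
  ultimately show ?thesis using that by blast
qed

lemma compact_fibre_of_closed_graph:
  assumes "closed (Sigma UNIV M)" "bounded (M x)"
  shows "compact (M (x::'a::topological_space) :: 'b::heine_borel set)"
proof -
  have "M x = Pair x -` Sigma UNIV M" by auto
  then have "closed (M x)"
    using continuous_closed_vimage[OF assms(1), of "Pair x"] by (simp add: continuous_intros)
  with assms(2) show ?thesis by (simp add: compact_eq_bounded_closed)
qed

lemma lsc_INF_closed_graph:
  fixes M :: "'a::heine_borel \<Rightarrow> 'b::heine_borel set" and g :: "'b \<Rightarrow> real"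
  assumes graph: "closed (Sigma UNIV M)"
    and locally_bounded: "\<And>x. \<exists>e>0. bounded (\<Union>y\<in>ball x e. M y)"
    and nonempty: "\<And>x. M x \<noteq> {}"
    and g: "continuous_on UNIV g"
  shows "lsc (\<lambda>x. INF v\<in>M x. g v)"
  unfolding lsc_def
proof (intro allI impI)
  have compact_M: "compact (M y)" for y
  proof (rule compact_fibre_of_closed_graph[OF graph])
    obtain e where "e > 0" "bounded (\<Union>y'\<in>ball y e. M y')" using locally_bounded by blast
    then show "bounded (M y)" by (meson UN_upper bounded_subset centre_in_ball)
  qed
  fix x c assume c: "c < (INF v\<in>M x. g v)"
  obtain e where "e > 0" and "bounded (\<Union>y\<in>ball x e. M y)" using locally_bounded by blast
  then have compact_K: "compact (closure (\<Union>y\<in>ball x e. M y))" by simp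
  \<comment> \<open>The graph points over cball x (e/2) with value at most c form a compact set; its projection
    is closed and misses x.\<close>
  define T where "T = (cball x (e/2) \<times> closure (\<Union>y\<in>ball x e. M y)) \<inter> (Sigma UNIV M \<inter> {p. g (snd p) \<le> c})"
  have "continuous_on UNIV (\<lambda>p. g (snd p))"
    by (rule continuous_on_compose2[OF g]) (auto intro: continuous_intros)
  then have "closed {p. g (snd p) \<le> c}"
    by (auto intro: closed_Collect_le)
  then have "compact T" unfolding T_def
    using compact_K graph by (intro compact_Int_closed compact_Times closed_Int compact_cball)
  then have "closed (fst ` T)"
    by (intro compact_imp_closed compact_continuous_image continuous_on_fst continuous_on_id)
  moreover have "x \<notin> fst ` T"
  proof
    assume "x \<in> fst ` T"
    then obtain v where "v \<in> M x" "g v \<le> c" unfolding T_def by auto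
    moreover have "bdd_below (g ` M x)"
      using compact_M g by (intro bounded_imp_bdd_below compact_imp_bounded compact_continuous_image)
        (auto elim: continuous_on_subset)
    ultimately show False using c cINF_lower[of g "M x" v] by linarith
  qed
  ultimately have "\<forall>\<^sub>F y in nhds x. y \<notin> fst ` T"
    using eventually_nhds_in_open[of "- fst ` T" x] by (simp add: open_Compl)
  moreover have "\<forall>\<^sub>F y in nhds x. y \<in> ball x (e/2)"
    using \<open>e > 0\<close> by (intro eventually_nhds_in_open) auto
  ultimately show "\<forall>\<^sub>F y in nhds x. c < (INF v\<in>M y. g v)"
  proof eventually_elim
    case (elim y)
    obtain m where m: "m \<in> M y" "(INF v\<in>M y. g v) = g m"
      using compact_attains_INF[OF compact_M nonempty continuous_on_subset[OF g subset_UNIV]] by blast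
    have "m \<in> closure (\<Union>y\<in>ball x e. M y)"
      using elim m(1) \<open>e > 0\<close> by (intro closure_subset[THEN subsetD]) auto
    moreover have "(y, m) \<notin> T"
      using elim(1) image_eqI[of y fst "(y, m)"] by auto
    ultimately show ?case
      using elim(2) m unfolding T_def by auto
  qed
qed

definition wenergy :: "real^'k::finite \<Rightarrow> ('m::metric_space)^'k \<Rightarrow> 'm \<Rightarrow> real" where
  "wenergy a u v = (\<Sum>j\<in>UNIV. a$j * (dist v (u$j))\<^sup>2)"

lemma wmean_wenergy: "wmean a u = {v. \<forall>w. wenergy a u v \<le> wenergy a u w}"
  unfolding wmean_def wenergy_def by simp

lemma continuous_on_wenergy: "continuous_on UNIV (\<lambda>p. wenergy a (fst p) (snd p))"
  unfolding wenergy_def by (intro continuous_intros)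

lemma abs_diff_dist_squares_le:
  assumes "dist z y \<le> D"
  shows "\<bar>(dist v y)\<^sup>2 - (dist v z)\<^sup>2\<bar> \<le> D * (2 * dist v z + D)"
proof -
  have "\<bar>dist v y - dist v z\<bar> \<le> D" "dist v y + dist v z \<le> 2 * dist v z + D"
    using dist_triangle[of v y z] dist_triangle[of v z y] assms by (auto simp: dist_commute)
  then have "\<bar>dist v y - dist v z\<bar> * (dist v y + dist v z) \<le> D * (2 * dist v z + D)"
    by (intro mult_mono) auto
  moreover have "(dist v y)\<^sup>2 - (dist v z)\<^sup>2 = (dist v y - dist v z) * (dist v y + dist v z)"
    by (simp add: power2_eq_square algebra_simps)
  ultimately show ?thesis by (simp add: abs_mult)
qed

lemma wenergy_lower_bound:
  fixes a :: "real^'k::finite"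
  assumes "(\<Sum>j\<in>UNIV. a$j) = 1" and "\<And>j. dist z (u$j) \<le> D"
  shows "(dist v z)\<^sup>2 - (\<Sum>j\<in>UNIV. \<bar>a$j\<bar>) * D * (2 * dist v z + D) \<le> wenergy a u v"
proof -
  have "wenergy a u v - (dist v z)\<^sup>2 = (\<Sum>j\<in>UNIV. a$j * ((dist v (u$j))\<^sup>2 - (dist v z)\<^sup>2))"
    using assms(1) by (simp add: wenergy_def sum_subtractf right_diff_distrib sum_distrib_right[symmetric])
  also have "\<dots> \<ge> (\<Sum>j\<in>UNIV. - (\<bar>a$j\<bar> * (D * (2 * dist v z + D))))"
  proof (rule sum_mono)
    fix j
    have "\<bar>a$j * ((dist v (u$j))\<^sup>2 - (dist v z)\<^sup>2)\<bar> \<le> \<bar>a$j\<bar> * (D * (2 * dist v z + D))"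
      using abs_diff_dist_squares_le[OF assms(2)] by (simp add: abs_mult mult_left_mono)
    then show "- (\<bar>a$j\<bar> * (D * (2 * dist v z + D))) \<le> a$j * ((dist v (u$j))\<^sup>2 - (dist v z)\<^sup>2)"
      by linarith
  qed
  finally show ?thesis by (simp add: sum_negf sum_distrib_right mult.assoc)
qed

lemma wenergy_upper_bound:
  assumes "\<And>j. dist z (u$j) \<le> D"
  shows "wenergy a u z \<le> (\<Sum>j\<in>UNIV. \<bar>a$j\<bar>) * D\<^sup>2"
  unfolding wenergy_def sum_distrib_right
proof (rule sum_mono)
  fix j
  have "a$j * (dist z (u$j))\<^sup>2 \<le> \<bar>a$j\<bar> * (dist z (u$j))\<^sup>2" by (intro mult_right_mono) auto
  also have "\<dots> \<le> \<bar>a$j\<bar> * D\<^sup>2" by (intro mult_left_mono power_mono assms) auto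
  finally show "a$j * (dist z (u$j))\<^sup>2 \<le> \<bar>a$j\<bar> * D\<^sup>2" .
qed

lemma le_of_square_le_affine:
  fixes r b c :: real
  assumes "r\<^sup>2 \<le> b * r + c" "0 \<le> b" "0 \<le> c"
  shows "r \<le> 1 + b + c"
proof (cases "r \<le> 1")
  case False
  then have "c \<le> c * r" using assms(3) by (simp add: mult_le_cancel_left1)
  then have "r * r \<le> (b + c) * r" using assms(1) by (simp add: power2_eq_square algebra_simps)
  then show ?thesis using False by (simp add: mult_le_cancel_right)
qed (use assms in auto)

lemma wenergy_sublevel_subset_cball:
  fixes a :: "real^'k::finite"
  assumes "(\<Sum>j\<in>UNIV. a$j) = 1" and "dist (\<chi> j. z) u \<le> D"
  shows "{v. wenergy a u v \<le> wenergy a u z}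
    \<subseteq> cball z (1 + 2 * (\<Sum>j\<in>UNIV. \<bar>a$j\<bar>) * D + 2 * (\<Sum>j\<in>UNIV. \<bar>a$j\<bar>) * D\<^sup>2)"
proof
  fix v assume "v \<in> {v. wenergy a u v \<le> wenergy a u z}"
  then have v: "wenergy a u v \<le> wenergy a u z" by simp
  define \<alpha> where "\<alpha> = (\<Sum>j\<in>UNIV. \<bar>a$j\<bar>)"
  define r where "r = dist v z"
  have D: "dist z (u$j) \<le> D" for j
    using dist_vec_nth_le[of "\<chi> j. z" j u] assms(2) by simp
  have "0 \<le> \<alpha>" unfolding \<alpha>_def by (simp add: sum_nonneg)
  have "0 \<le> D" using order_trans[OF zero_le_dist assms(2)] .
  have "\<alpha> * D * (2 * r + D) = (2 * \<alpha> * D) * r + \<alpha> * D\<^sup>2"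
    by (simp add: algebra_simps power2_eq_square)
  then have "r\<^sup>2 \<le> (2 * \<alpha> * D) * r + 2 * \<alpha> * D\<^sup>2"
    using wenergy_lower_bound[OF assms(1) D, of v] wenergy_upper_bound[OF D, of a] v
    unfolding \<alpha>_def r_def by linarith
  from le_of_square_le_affine[OF this] show "v \<in> cball z (1 + 2 * \<alpha> * D + 2 * \<alpha> * D\<^sup>2)"
    using \<open>0 \<le> \<alpha>\<close> \<open>0 \<le> D\<close> unfolding r_def by (simp add: dist_commute)
qed

lemma wmean_subset_cball:
  fixes a :: "real^'k::finite"
  assumes "(\<Sum>j\<in>UNIV. a$j) = 1" and "dist (\<chi> j. z) u \<le> D"
  shows "wmean a u \<subseteq> cball z (1 + 2 * (\<Sum>j\<in>UNIV. \<bar>a$j\<bar>) * D + 2 * (\<Sum>j\<in>UNIV. \<bar>a$j\<bar>) * D\<^sup>2)"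
  using wenergy_sublevel_subset_cball[OF assms] unfolding wmean_wenergy by blast

lemma wmean_nonempty:
  fixes a :: "real^'k::finite" and u :: "('m::heine_borel)^'k"
  assumes "(\<Sum>j\<in>UNIV. a$j) = 1"
  shows "wmean a u \<noteq> {}"
proof -
  fix z :: 'm
  define D where "D = dist (\<chi> j. z) u"
  define R where "R = 1 + 2 * (\<Sum>j\<in>UNIV. \<bar>a$j\<bar>) * D + 2 * (\<Sum>j\<in>UNIV. \<bar>a$j\<bar>) * D\<^sup>2"
  have sublevel: "{v. wenergy a u v \<le> wenergy a u z} \<subseteq> cball z R"
    unfolding R_def D_def by (rule wenergy_sublevel_subset_cball[OF assms order_refl])
  have "continuous_on (cball z R) (wenergy a u)"
    unfolding wenergy_def by (intro continuous_intros)
  moreover have "z \<in> cball z R" using sublevel by blast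
  ultimately obtain m where m: "m \<in> cball z R" "\<And>v. v \<in> cball z R \<Longrightarrow> wenergy a u m \<le> wenergy a u v"
    using continuous_attains_inf[OF compact_cball] by blast
  have "wenergy a u m \<le> wenergy a u w" for w
  proof (cases "w \<in> cball z R")
    case False
    with sublevel have "wenergy a u z < wenergy a u w" by (meson mem_Collect_eq not_le subsetD)
    with m(2)[OF \<open>z \<in> cball z R\<close>] show ?thesis by linarith
  qed (use m in blast)
  then show ?thesis unfolding wmean_wenergy by blast
qed

lemma closed_graph_wmean: "closed (Sigma UNIV (wmean a))"
proof -
  have graph: "Sigma UNIV (wmean a) = (\<Inter>w. {p. wenergy a (fst p) (snd p) \<le> wenergy a (fst p) w})"
    unfolding wmean_wenergy by auto
  have "continuous_on UNIV (\<lambda>p. wenergy a (fst p) w)" for w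
    unfolding wenergy_def by (intro continuous_intros)
  then show ?thesis
    unfolding graph by (intro closed_INT ballI closed_Collect_le continuous_on_wenergy)
qed

lemma compact_wmean:
  fixes a :: "real^'k::finite" and u :: "('m::heine_borel)^'k"
  assumes "(\<Sum>j\<in>UNIV. a$j) = 1"
  shows "compact (wmean a u)"
  by (rule compact_fibre_of_closed_graph[OF closed_graph_wmean])
    (rule bounded_subset[OF bounded_cball wmean_subset_cball[OF assms order_refl]])

lemma wmean_locally_bounded:
  fixes a :: "real^'k::finite" and u :: "('m::heine_borel)^'k"
  assumes "(\<Sum>j\<in>UNIV. a$j) = 1"
  shows "bounded (\<Union>y\<in>ball u 1. wmean a y)"
proof -
  fix z :: 'm
  have "dist (\<chi> j. z) y \<le> dist (\<chi> j. z) u + 1" if "y \<in> ball u 1" for y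
    using that dist_triangle[of "\<chi> j. z" y u] by (simp add: dist_commute)
  then have "(\<Union>y\<in>ball u 1. wmean a y) \<subseteq> cball z (1 + 2 * (\<Sum>j\<in>UNIV. \<bar>a$j\<bar>) * (dist (\<chi> j. z) u + 1)
      + 2 * (\<Sum>j\<in>UNIV. \<bar>a$j\<bar>) * (dist (\<chi> j. z) u + 1)\<^sup>2)"
    using wmean_subset_cball[OF assms] by blast
  then show ?thesis by (rule bounded_subset[OF bounded_cball])
qed

lemma distA_eq_INF_wmean:
  fixes A :: "real^'k::finite^'n::finite" and f :: "('m::heine_borel)^'n"
  assumes "(\<Sum>j\<in>UNIV. A$i$j) = 1"
  shows "distA A f u i = (INF v\<in>wmean (A$i) u. dist v (f$i))"
proof -
  have "continuous_on (wmean (A$i) u) (\<lambda>v. dist v (f$i))" by (intro continuous_intros)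
  then obtain m where m: "m \<in> wmean (A$i) u" "\<And>v. v \<in> wmean (A$i) u \<Longrightarrow> dist m (f$i) \<le> dist v (f$i)"
      "(INF v\<in>wmean (A$i) u. dist v (f$i)) = dist m (f$i)"
    using compact_attains_INF[OF compact_wmean[OF assms] wmean_nonempty[OF assms]] by blast
  then have "m \<in> Aset A f u i" unfolding Aset_def by blast
  then have "(\<lambda>v. dist v (f$i)) ` Aset A f u i = {dist m (f$i)}"
    using m unfolding Aset_def by (auto intro!: antisym)
  then show ?thesis unfolding distA_def m(3) by simp
qed

lemma lsc_distA:
  fixes A :: "real^'k::finite^'n::finite" and f :: "('m::heine_borel)^'n"
  assumes "(\<Sum>j\<in>UNIV. A$i$j) = 1"
  shows "lsc (\<lambda>u. distA A f u i)"
  unfolding distA_eq_INF_wmean[OF assms]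
proof (rule lsc_INF_closed_graph[where M="wmean (A$i)" and g="\<lambda>v. dist v (f$i)"])
  show "\<exists>e>0. bounded (\<Union>y\<in>ball u e. wmean (A$i) y)" for u :: "'m^'k"
    using wmean_locally_bounded[OF assms, of u] by (intro exI[of _ 1]) simp
  show "closed (Sigma UNIV (wmean (A$i)))" by (rule closed_graph_wmean)
  show "wmean (A$i) u \<noteq> {}" for u :: "'m^'k" by (rule wmean_nonempty[OF assms])
  show "continuous_on UNIV (\<lambda>v. dist v (f$i))" by (intro continuous_intros)
qed

lemma distA_nonneg:
  fixes A :: "real^'k::finite^'n::finite" and f :: "('m::heine_borel)^'n"
  assumes "(\<Sum>j\<in>UNIV. A$i$j) = 1"
  shows "0 \<le> distA A f u i"
  unfolding distA_eq_INF_wmean[OF assms] by (rule cINF_greatest[OF wmean_nonempty[OF assms] zero_le_dist])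

theorem lemma3p3:
  fixes A :: "real^'k::finite^'n::finite" and f :: "('m::heine_borel)^'n" and p :: real
  assumes "connected (UNIV :: 'm set)"
    and "\<forall>i. (\<Sum>j\<in>UNIV. A$i$j) = 1"
    and "1 \<le> p"
  shows "lsc (data_term A f p)"
proof -
  have "lsc (\<lambda>u. distA A f u i powr p)" for i
    using assms(2,3) by (intro lsc_powr lsc_distA distA_nonneg) simp_all
  then show ?thesis
    unfolding data_term_def[abs_def] by (intro lsc_sum) auto
qed

end
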